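(* Let $T$ be a hypercyclic bounded operator on a separable Banach space $X$. For any $\alpha>0$, there exists a comeager set of vectors $x\in HC(T)$ such that $\overline{\mathrm{dens}}\,\mathcal N_T(x,B_\alpha)=c(T)$.
   Context: $HC(T)$ is the set of vectors with dense $T$-orbit. $\mathcal N_T(x,B)=\{i\in\mathbb N:T^ix\in B\}$; $\overline{\mathrm{dens}}(D)=\limsup_N\frac1N\#(D\cap[1,N])$; $B_R$ is the closed ball of radius $R$ centred at $0$. $c(T)=\sup_{R>0}\sup_{x\in HC(T)}\overline{\mathrm{dens}}\,\mathcal N_T(x,B_R)$. *)

theory Defs
  imports "HOL-Analysis.Analysis"
begin

definition HC :: "('a::topological_space \<Rightarrow> 'a) \<Rightarrow> 'a set" where
  "HC T = {x. closure (range (\<lambda>n. (T ^^ n) x)) = UNIV}"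

definition hypercyclic :: "('a::topological_space \<Rightarrow> 'a) \<Rightarrow> bool" where
  "hypercyclic T \<longleftrightarrow> HC T \<noteq> {}"

definition return_set :: "('a \<Rightarrow> 'a) \<Rightarrow> 'a \<Rightarrow> 'a set \<Rightarrow> nat set" where
  "return_set T x B = {i. (T ^^ i) x \<in> B}"

definition upper_density :: "nat set \<Rightarrow> ereal" where
  "upper_density D = limsup (\<lambda>N. ereal (real (card (D \<inter> {1..N})) / real N))"

definition cT :: "('a::real_normed_vector \<Rightarrow> 'a) \<Rightarrow> ereal" where
  "cT T = (SUP R\<in>{0<..}. SUP x\<in>HC T. upper_density (return_set T x (cball 0 R)))"

definition comeager :: "'a::topological_space set \<Rightarrow> bool" where
  "comeager A \<longleftrightarrow> (\<exists>\<F>. countable \<F> \<and> (\<forall>U\<in>\<F>. open U \<and> closure U = UNIV) \<and> \<Inter>\<F> \<subseteq> A)"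

end

theory Submission
  imports Defs
begin

(* Let U = ball 0 \<alpha> and let r be the real number c(T) (it lies in [0,1]).
   The set in question contains HC T \<inter> {x. r \<le> dens N_T(x,U)}: for such x,
   r \<le> dens N_T(x,U) \<le> dens N_T(x,B_\<alpha>) \<le> c(T) = r.  Both sets are comeager:

   - HC T is comeager (Birkhoff): it is the intersection, over a countable
     basis, of the dense open sets of points whose orbit visits a basic open set.
   - For \<delta> < r, the open sets of points x with \<delta>N < #(N_T(x,U) \<inter> [1,N]) for
     some N \<ge> N0 are dense: by rescaling (T is linear) there is a hypercyclic x1
     whose return set to U has upper density > \<delta>, and since shifting a set of
     integers does not lower its upper density, the whole orbit of x1 lies in
     these sets.  Intersecting over \<delta> = r - 1/(n+1) and N0 gives density \<ge> r. *)

section \<open>Upper density\<close>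

lemma upper_density_nonneg: "0 \<le> upper_density D"
  unfolding upper_density_def by (rule le_Limsup) auto

lemma upper_density_le_1: "upper_density D \<le> 1"
  unfolding upper_density_def
proof (rule Limsup_bounded, rule always_eventually, rule allI)
  fix N :: nat
  have "card (D \<inter> {1..N}) \<le> N"
    using card_mono[of "{1..N}" "D \<inter> {1..N}"] by auto
  then show "ereal (real (card (D \<inter> {1..N})) / real N) \<le> 1"
    by (cases "N = 0") (auto simp: divide_le_eq_1)
qed

lemma upper_density_mono: "D \<subseteq> E \<Longrightarrow> upper_density D \<le> upper_density E"
  unfolding upper_density_def
proof (rule Limsup_mono, rule always_eventually, rule allI)
  fix N :: nat assume "D \<subseteq> E"
  then have "card (D \<inter> {1..N}) \<le> card (E \<inter> {1..N})" by (intro card_mono) auto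
  then show "ereal (real (card (D \<inter> {1..N})) / real N)
      \<le> ereal (real (card (E \<inter> {1..N})) / real N)"
    by (simp add: divide_right_mono)
qed

lemma upper_density_frequently:
  assumes "ereal \<delta> < upper_density D"
  shows "\<exists>N\<ge>N0. \<delta> * real N < real (card (D \<inter> {1..N}))"
proof (rule ccontr)
  assume "\<not> ?thesis"
  then have small: "real (card (D \<inter> {1..N})) \<le> \<delta> * real N" if "N \<ge> N0" for N
    using that by (auto simp: not_less)
  have "upper_density D \<le> ereal \<delta>" unfolding upper_density_def
  proof (rule Limsup_bounded)
    show "\<forall>\<^sub>F N in sequentially. ereal (real (card (D \<inter> {1..N})) / real N) \<le> ereal \<delta>"
      using eventually_ge_at_top[of "max N0 1"]
      by eventually_elim (use small in \<open>auto simp: pos_divide_le_eq\<close>)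
  qed
  with assms show False by simp
qed

lemma upper_density_lower_bound:
  assumes "\<And>N0. \<exists>N\<ge>N0. \<delta> * real N < real (card (D \<inter> {1..N}))"
  shows "ereal \<delta> \<le> upper_density D"
  unfolding upper_density_def limsup_INF_SUP
proof (rule INF_greatest)
  fix n :: nat
  obtain N where N: "N \<ge> max n 1" "\<delta> * real N < real (card (D \<inter> {1..N}))"
    using assms by blast
  then have "\<delta> \<le> real (card (D \<inter> {1..N})) / real N" by (simp add: pos_le_divide_eq)
  then show "ereal \<delta> \<le> (SUP m\<in>{n..}. ereal (real (card (D \<inter> {1..m})) / real m))"
    using N by (intro SUP_upper2[of N]) auto
qed

lemma card_shift_le:
  "card (D \<inter> {1..N + k}) \<le> k + card ({i. i + k \<in> D} \<inter> {1..N})"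
proof -
  let ?S = "{i. i + k \<in> D} \<inter> {1..N}"
  have "D \<inter> {1..N + k} \<subseteq> {1..k} \<union> (\<lambda>i. i + k) ` ?S"
  proof
    fix j assume j: "j \<in> D \<inter> {1..N + k}"
    show "j \<in> {1..k} \<union> (\<lambda>i. i + k) ` ?S"
    proof (cases "j \<le> k")
      case False
      then have "j = (j - k) + k" "j - k \<in> ?S" using j by auto
      then show ?thesis by blast
    qed (use j in auto)
  qed
  then have "card (D \<inter> {1..N + k}) \<le> card ({1..k} \<union> (\<lambda>i. i + k) ` ?S)"
    by (intro card_mono) auto
  also have "\<dots> \<le> card {1..k} + card ((\<lambda>i. i + k) ` ?S)" by (rule card_Un_le)
  also have "\<dots> \<le> k + card ?S" using card_image_le[of ?S "\<lambda>i. i + k"] by simp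
  finally show ?thesis .
qed

lemma upper_density_shift: "upper_density D \<le> upper_density {i. i + k \<in> D}"
proof (rule ccontr)
  let ?E = "{i. i + k \<in> D}"
  assume "\<not> ?thesis"
  then obtain \<delta> where \<delta>: "upper_density ?E < ereal \<delta>" "ereal \<delta> < upper_density D"
    using ereal_dense2[of "upper_density ?E" "upper_density D"] by (auto simp: not_le)
  obtain \<delta>' where "ereal \<delta> < ereal \<delta>'" "ereal \<delta>' < upper_density D"
    using ereal_dense2[OF \<delta>(2)] by blast
  then have \<delta>': "\<delta> < \<delta>'" "ereal \<delta>' < upper_density D" by simp_all
  have "\<delta> > 0"
    using order.strict_trans1[OF upper_density_nonneg[of ?E] \<delta>(1)] by (simp add: zero_ereal_def)
  have "\<exists>N\<ge>N0. \<delta> * real N < real (card (?E \<inter> {1..N}))" for N0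
  proof -
    obtain M0 :: nat where M0: "real k / (\<delta>' - \<delta>) < M0" using reals_Archimedean2 by blast
    then have k_small: "real k < (\<delta>' - \<delta>) * M0" using \<delta>'(1) by (simp add: divide_less_eq mult.commute)
    obtain M where M: "M \<ge> N0 + k + M0" "\<delta>' * real M < real (card (D \<inter> {1..M}))"
      using upper_density_frequently[OF \<delta>'(2)] by blast
    define N where "N = M - k"
    have N: "N \<ge> N0" "M = N + k" using M(1) by (auto simp: N_def)
    have "(\<delta>' - \<delta>) * M0 \<le> (\<delta>' - \<delta>) * M" using \<delta>'(1) M(1) by (intro mult_left_mono) auto
    moreover have "\<delta> * real N \<le> \<delta> * real M" using \<open>\<delta> > 0\<close> N by simp
    moreover have "real (card (D \<inter> {1..M})) \<le> real k + real (card (?E \<inter> {1..N}))"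
      using card_shift_le[of D N k] unfolding N(2) of_nat_add[symmetric] of_nat_le_iff .
    ultimately have "\<delta> * real N < real (card (?E \<inter> {1..N}))"
      using k_small M(2) by (simp add: algebra_simps)
    with N show ?thesis by blast
  qed
  then have "ereal \<delta> \<le> upper_density ?E" by (rule upper_density_lower_bound)
  with \<delta>(1) show False by simp
qed

section \<open>Orbits and hypercyclic vectors\<close>

lemma dense_iff_meets_open:
  "closure S = UNIV \<longleftrightarrow> (\<forall>W. open W \<longrightarrow> W \<noteq> {} \<longrightarrow> W \<inter> S \<noteq> {})"
proof
  assume "closure S = UNIV"
  then show "\<forall>W. open W \<longrightarrow> W \<noteq> {} \<longrightarrow> W \<inter> S \<noteq> {}"
    using open_Int_closure_eq_empty by auto
next
  assume meets: "\<forall>W. open W \<longrightarrow> W \<noteq> {} \<longrightarrow> W \<inter> S \<noteq> {}"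
  have "- closure S = {}"
    using meets[rule_format, of "- closure S"] closure_subset[of S] by auto
  then show "closure S = UNIV" by auto
qed

lemma HC_iff_visits:
  "x \<in> HC T \<longleftrightarrow> (\<forall>W. open W \<longrightarrow> W \<noteq> {} \<longrightarrow> (\<exists>n. (T ^^ n) x \<in> W))"
  unfolding HC_def dense_iff_meets_open by blast

text \<open>In a \<open>T\<^sub>1\<close> space the orbit of a hypercyclic vector visits every infinite open
  set after any given time: removing the finitely many earlier orbit points
  leaves a nonempty open set.\<close>

lemma HC_visits_late:
  fixes T :: "'a::t1_space \<Rightarrow> 'a"
  assumes "x \<in> HC T" "open V" "infinite V"
  shows "\<exists>m\<ge>K. (T ^^ m) x \<in> V"
proof -
  let ?F = "(\<lambda>j. (T ^^ j) x) ` {..<K}"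
  have "open (V - ?F)" using assms(2) by (intro open_Diff finite_imp_closed) auto
  moreover have "V - ?F \<noteq> {}" using assms(3) finite_subset[of V ?F] by auto
  ultimately obtain m where "(T ^^ m) x \<in> V - ?F"
    using assms(1) unfolding HC_iff_visits by blast
  then show ?thesis by (intro exI[of _ m]) (auto simp: not_le)
qed

text \<open>In a nontrivial normed space every nonempty open set is infinite, since it
  contains a nondegenerate segment.\<close>

lemma open_nonempty_infinite:
  fixes V :: "'a::real_normed_vector set" and v :: 'a
  assumes "open V" "y \<in> V" "v \<noteq> 0"
  shows "infinite V"
proof -
  obtain e where e: "e > 0" "ball y e \<subseteq> V" using assms(1,2) open_contains_ball by blast
  define z where "z = y + (e / (2 * norm v)) *\<^sub>R v"
  have "dist y z = e / 2" using e(1) assms(3) by (simp add: z_def dist_norm)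
  then have "z \<in> ball y e" "z \<noteq> y" using e(1) by auto
  then have "closed_segment y z \<subseteq> ball y e" using e(1) by (intro closed_segment_subset) auto
  then have "open_segment y z \<subseteq> V" using e(2) segment_open_subset_closed by blast
  with \<open>z \<noteq> y\<close> show ?thesis using finite_subset finite_open_segment by metis
qed

lemma HC_visits_late_normed:
  fixes T :: "'a::real_normed_vector \<Rightarrow> 'a"
  assumes "x \<in> HC T" "open V" "V \<noteq> {}"
  shows "\<exists>m\<ge>K. (T ^^ m) x \<in> V"
proof (cases "\<exists>v::'a. v \<noteq> 0")
  case True
  then obtain v :: 'a where "v \<noteq> 0" by blast
  moreover obtain y where "y \<in> V" using assms(3) by blast
  ultimately have "infinite V" using assms(2) open_nonempty_infinite by blast
  then show ?thesis using assms(1,2) HC_visits_late by blast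
next
  case False
  obtain v where "v \<in> V" using assms(3) by blast
  moreover have "(T ^^ K) x = v" using False by (metis (full_types))
  ultimately show ?thesis by (intro exI[of _ K]) simp
qed

lemma continuous_on_funpow:
  fixes T :: "'a::topological_space \<Rightarrow> 'a"
  shows "continuous_on UNIV T \<Longrightarrow> continuous_on UNIV (T ^^ n)"
proof (induction n)
  case (Suc n)
  then show ?case
    using continuous_on_compose[of UNIV "T ^^ n" T] continuous_on_subset by fastforce
qed simp

lemma funpow_scaleR:
  fixes T :: "'a::real_vector \<Rightarrow> 'a"
  shows "linear T \<Longrightarrow> (T ^^ n) (c *\<^sub>R x) = c *\<^sub>R (T ^^ n) x"
  by (induction n) (simp_all add: linear_scale)

lemma HC_scaleR:
  fixes T :: "'a::real_normed_vector \<Rightarrow> 'a"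
  assumes "linear T" "x \<in> HC T" "c \<noteq> 0"
  shows "c *\<^sub>R x \<in> HC T"
  unfolding HC_iff_visits
proof (intro allI impI)
  fix W :: "'a set" assume W: "open W" "W \<noteq> {}"
  let ?W' = "(\<lambda>y. c *\<^sub>R y) -` W"
  have "open ?W'"
    using open_vimage[OF W(1) linear_continuous_on[OF bounded_linear_scaleR_right]] .
  moreover have "?W' \<noteq> {}"
  proof -
    obtain w where "w \<in> W" using W(2) by blast
    then have "inverse c *\<^sub>R w \<in> ?W'" using assms(3) by simp
    then show ?thesis by blast
  qed
  ultimately obtain n where "(T ^^ n) x \<in> ?W'" using assms(2) unfolding HC_iff_visits by blast
  then show "\<exists>n. (T ^^ n) (c *\<^sub>R x) \<in> W" using funpow_scaleR[OF assms(1)] by auto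
qed

section \<open>Comeager sets\<close>

lemma comeager_Int:
  assumes "comeager A" "comeager B"
  shows "comeager (A \<inter> B)"
proof -
  obtain \<F> where \<F>: "countable \<F>" "\<forall>U\<in>\<F>. open U \<and> closure U = UNIV" "\<Inter>\<F> \<subseteq> A"
    using assms(1) unfolding comeager_def by (elim exE conjE)
  obtain \<G> where \<G>: "countable \<G>" "\<forall>U\<in>\<G>. open U \<and> closure U = UNIV" "\<Inter>\<G> \<subseteq> B"
    using assms(2) unfolding comeager_def by (elim exE conjE)
  have "\<Inter>(\<F> \<union> \<G>) \<subseteq> A \<inter> B" using \<F>(3) \<G>(3) by auto
  then show ?thesis unfolding comeager_def using \<F> \<G> by (intro exI[of _ "\<F> \<union> \<G>"]) auto
qed

lemma comeager_subset: "comeager A \<Longrightarrow> A \<subseteq> B \<Longrightarrow> comeager B"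
  unfolding comeager_def by (meson order_trans)

text \<open>For each basic open set
  \<open>V\<close>, the points whose orbit visits \<open>V\<close> form a dense open set, because the
  orbit of a hypercyclic vector visits \<open>V\<close> after any prescribed time.\<close>

lemma comeager_HC:
  fixes T :: "'a::{real_normed_vector, second_countable_topology} \<Rightarrow> 'a"
  assumes "continuous_on UNIV T" "hypercyclic T"
  shows "comeager (HC T)"
proof -
  obtain x0 where x0: "x0 \<in> HC T" using assms(2) unfolding hypercyclic_def by blast
  obtain \<B> :: "'a set set" where \<B>: "countable \<B>" "topological_basis \<B>"
    using ex_countable_basis by blast
  define visits where "visits V = (\<Union>n. (T ^^ n) -` V)" for V
  have visits_open: "open (visits V)" if "open V" for V
    unfolding visits_def using that continuous_on_funpow[OF assms(1)] by (auto intro: open_vimage)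
  have visits_dense: "closure (visits V) = UNIV" if V: "open V" "V \<noteq> {}" for V
    unfolding dense_iff_meets_open
  proof (intro allI impI)
    fix W :: "'a set" assume "open W" "W \<noteq> {}"
    then obtain k where k: "(T ^^ k) x0 \<in> W" using x0 unfolding HC_iff_visits by blast
    obtain m where "m \<ge> k" "(T ^^ m) x0 \<in> V" using HC_visits_late_normed[OF x0 V] by blast
    moreover have "(T ^^ (m - k)) ((T ^^ k) x0) = (T ^^ (m - k + k)) x0"
      by (simp add: funpow_add)
    ultimately have "(T ^^ (m - k)) ((T ^^ k) x0) \<in> V" by simp
    with k show "W \<inter> visits V \<noteq> {}" unfolding visits_def by blast
  qed
  define \<F> where "\<F> = visits ` (\<B> - {{}})"
  have "\<Inter>\<F> \<subseteq> HC T"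
  proof
    fix x assume x: "x \<in> \<Inter>\<F>"
    show "x \<in> HC T" unfolding HC_iff_visits
    proof (intro allI impI)
      fix W :: "'a set" assume W: "open W" "W \<noteq> {}"
      then obtain w where "w \<in> W" by blast
      then obtain V where "V \<in> \<B>" "w \<in> V" "V \<subseteq> W" by (rule topological_basisE[OF \<B>(2) W(1)])
      then have "visits V \<in> \<F>" unfolding \<F>_def by auto
      then have "x \<in> visits V" using x by (rule InterD[rotated])
      then obtain n where "(T ^^ n) x \<in> V" unfolding visits_def by blast
      then show "\<exists>n. (T ^^ n) x \<in> W" using \<open>V \<subseteq> W\<close> by blast
    qed
  qed
  moreover have "\<forall>U\<in>\<F>. open U \<and> closure U = UNIV"
  proof
    fix U assume "U \<in> \<F>"
    then obtain V where "V \<in> \<B>" "V \<noteq> {}" "U = visits V" unfolding \<F>_def by blast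
    then show "open U \<and> closure U = UNIV"
      using visits_open visits_dense topological_basis_open[OF \<B>(2)] by simp
  qed
  moreover have "countable \<F>" using \<B>(1) unfolding \<F>_def by simp
  ultimately show ?thesis unfolding comeager_def by (intro exI[of _ \<F>] conjI)
qed

section \<open>Points with many returns\<close>

text \<open>A point lies in all of these sets (over \<open>N0\<close>) iff
  that proportion exceeds \<open>\<delta>\<close> infinitely often.\<close>

definition frequent_returns :: "('a \<Rightarrow> 'a) \<Rightarrow> 'a set \<Rightarrow> real \<Rightarrow> nat \<Rightarrow> 'a set" where
  "frequent_returns T U \<delta> N0 =
     {x. \<exists>N\<ge>N0. \<delta> * real N < real (card (return_set T x U \<inter> {1..N}))}"

text \<open>Exceeding a count only depends on finitely many iterates lying in the
  open set \<open>U\<close>, so these sets are open when \<open>T\<close> is continuous.\<close>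

lemma open_frequent_returns:
  fixes T :: "'a::topological_space \<Rightarrow> 'a"
  assumes "continuous_on UNIV T" "open U"
  shows "open (frequent_returns T U \<delta> N0)"
proof -
  let ?big = "\<lambda>N. {S. S \<subseteq> {1..N} \<and> \<delta> * real N < real (card S)}"
  have returns_eq: "frequent_returns T U \<delta> N0 = (\<Union>N\<in>{N0..}. \<Union>S\<in>?big N. \<Inter>i\<in>S. (T ^^ i) -` U)"
  proof (intro set_eqI iffI)
    fix x assume "x \<in> frequent_returns T U \<delta> N0"
    then obtain N where "N \<ge> N0" "\<delta> * real N < real (card (return_set T x U \<inter> {1..N}))"
      unfolding frequent_returns_def by blast
    then show "x \<in> (\<Union>N\<in>{N0..}. \<Union>S\<in>?big N. \<Inter>i\<in>S. (T ^^ i) -` U)"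
      by (intro UN_I[of N] UN_I[of "return_set T x U \<inter> {1..N}"]) (auto simp: return_set_def)
  next
    fix x assume "x \<in> (\<Union>N\<in>{N0..}. \<Union>S\<in>?big N. \<Inter>i\<in>S. (T ^^ i) -` U)"
    then obtain N S where NS: "N \<ge> N0" "S \<subseteq> {1..N}" "\<delta> * real N < real (card S)"
        "S \<subseteq> return_set T x U"
      by (auto simp: return_set_def)
    then have "card S \<le> card (return_set T x U \<inter> {1..N})" by (intro card_mono) auto
    with NS show "x \<in> frequent_returns T U \<delta> N0"
      unfolding frequent_returns_def by fastforce
  qed
  have opens: "open (\<Inter>i\<in>S. (T ^^ i) -` U)" if "S \<subseteq> {1..N}" for S N
    using finite_subset[OF that] assms
    by (intro open_INT) (auto intro: open_vimage continuous_on_funpow)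
  show ?thesis unfolding returns_eq by (intro open_UN ballI) (use opens in blast)
qed

lemma return_set_funpow:
  "return_set T ((T ^^ k) x) U = {i. i + k \<in> return_set T x U}"
  unfolding return_set_def by (simp add: funpow_add)

text \<open>If one hypercyclic vector returns to \<open>U\<close> with upper density above \<open>\<delta>\<close>, so
  does every point of its (dense) orbit, since shifting does not lower upper
  density; hence the sets \<open>frequent_returns\<close> are dense.\<close>

lemma dense_frequent_returns:
  assumes "x \<in> HC T" "ereal \<delta> < upper_density (return_set T x U)"
  shows "closure (frequent_returns T U \<delta> N0) = UNIV"
proof -
  have "(T ^^ k) x \<in> frequent_returns T U \<delta> N0" for k
  proof -
    have "ereal \<delta> < upper_density (return_set T ((T ^^ k) x) U)"
      using assms(2) upper_density_shift[of "return_set T x U" k]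
      unfolding return_set_funpow by order
    then show ?thesis unfolding frequent_returns_def using upper_density_frequently by blast
  qed
  then have "closure (range (\<lambda>k. (T ^^ k) x)) \<subseteq> closure (frequent_returns T U \<delta> N0)"
    by (intro closure_mono) auto
  then show ?thesis using assms(1) unfolding HC_def by auto
qed

text \<open>If hypercyclic vectors with return density arbitrarily close to \<open>r\<close> exist,
  then return density \<open>\<ge> r\<close> is a comeager property: intersect the dense open
  sets \<open>frequent_returns T U (r - 1/(n+1)) N0\<close> over all \<open>n\<close> and \<open>N0\<close>.\<close>

lemma comeager_return_density:
  fixes T :: "'a::topological_space \<Rightarrow> 'a"
  assumes "continuous_on UNIV T" "open U"
    and approx: "\<And>\<delta>. \<delta> < r \<Longrightarrow> \<exists>x\<in>HC T. ereal \<delta> < upper_density (return_set T x U)"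
  shows "comeager {x. ereal r \<le> upper_density (return_set T x U)}"
proof -
  define \<F> where "\<F> = (\<lambda>(n, N0). frequent_returns T U (r - 1 / (real n + 1)) N0) ` UNIV"
  have "countable \<F>" unfolding \<F>_def by simp
  moreover have "\<forall>V\<in>\<F>. open V \<and> closure V = UNIV"
  proof
    fix V assume "V \<in> \<F>"
    then obtain n N0 where V: "V = frequent_returns T U (r - 1 / (real n + 1)) N0"
      unfolding \<F>_def by auto
    obtain x where "x \<in> HC T" "ereal (r - 1 / (real n + 1)) < upper_density (return_set T x U)"
      using approx[of "r - 1 / (real n + 1)"] by auto
    then show "open V \<and> closure V = UNIV"
      unfolding V using open_frequent_returns[OF assms(1,2)] dense_frequent_returns by blast
  qed
  moreover have "\<Inter>\<F> \<subseteq> {x. ereal r \<le> upper_density (return_set T x U)}"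
  proof
    fix x assume x: "x \<in> \<Inter>\<F>"
    have below: "ereal (r - 1 / (real n + 1)) \<le> upper_density (return_set T x U)" for n
      using x unfolding \<F>_def frequent_returns_def by (intro upper_density_lower_bound) blast
    have "ereal r \<le> upper_density (return_set T x U)"
    proof (rule ereal_le_epsilon2)
      fix e :: real assume "e > 0"
      then obtain n :: nat where "inverse (real (Suc n)) < e" using reals_Archimedean by blast
      then have "ereal r \<le> ereal (r - 1 / (real n + 1)) + ereal e" by (simp add: field_simps)
      also have "\<dots> \<le> upper_density (return_set T x U) + ereal e"
        using below[of n] by (intro add_right_mono)
      finally show "ereal r \<le> upper_density (return_set T x U) + ereal e" .
    qed
    then show "x \<in> {x. ereal r \<le> upper_density (return_set T x U)}" by simp
  qed
  ultimately show ?thesis unfolding comeager_def by (intro exI[of _ \<F>] conjI)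
qed

lemma upper_density_le_cT:
  assumes "x \<in> HC T" "R > 0"
  shows "upper_density (return_set T x (cball 0 R)) \<le> cT T"
proof -
  have "upper_density (return_set T x (cball 0 R))
      \<le> (SUP y\<in>HC T. upper_density (return_set T y (cball 0 R)))"
    using assms(1) by (rule SUP_upper)
  also have "\<dots> \<le> cT T" unfolding cT_def using assms(2) by (intro SUP_upper) auto
  finally show ?thesis .
qed

lemma cT_nonneg: "hypercyclic T \<Longrightarrow> 0 \<le> cT T"
  unfolding hypercyclic_def
  using upper_density_le_cT[of _ T 1] upper_density_nonneg by (meson ex_in_conv order_trans zero_less_one)

lemma cT_le_1: "cT T \<le> 1"
  unfolding cT_def by (intro SUP_least upper_density_le_1)

text \<open>Below \<open>c(T)\<close>, the return density to any ball \<open>B_R\<close> can be transferred to the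
  open ball of radius \<open>\<alpha>\<close>: rescaling a hypercyclic vector by \<open>\<alpha>/(2R)\<close> keeps it
  hypercyclic and maps returns to \<open>B_R\<close> into returns to \<open>ball 0 \<alpha>\<close>.\<close>

lemma below_cT_ball:
  fixes T :: "'a::real_normed_vector \<Rightarrow> 'a"
  assumes "linear T" "\<alpha> > 0" "ereal \<delta> < cT T"
  shows "\<exists>x\<in>HC T. ereal \<delta> < upper_density (return_set T x (ball 0 \<alpha>))"
proof -
  obtain R x where R: "R > 0" "x \<in> HC T" "ereal \<delta> < upper_density (return_set T x (cball 0 R))"
    using assms(3) unfolding cT_def less_SUP_iff by auto
  define c where "c = \<alpha> / (2 * R)"
  have c: "c > 0" "c * R < \<alpha>" using R(1) assms(2) by (auto simp: c_def field_simps)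
  have "return_set T x (cball 0 R) \<subseteq> return_set T (c *\<^sub>R x) (ball 0 \<alpha>)"
  proof
    fix i assume "i \<in> return_set T x (cball 0 R)"
    then have "c * norm ((T ^^ i) x) \<le> c * R"
      using c(1) unfolding return_set_def by (simp add: mult_left_mono)
    then have "c * norm ((T ^^ i) x) < \<alpha>" using c(2) by linarith
    then show "i \<in> return_set T (c *\<^sub>R x) (ball 0 \<alpha>)"
      using c unfolding return_set_def by (simp add: funpow_scaleR[OF assms(1)])
  qed
  then have "ereal \<delta> < upper_density (return_set T (c *\<^sub>R x) (ball 0 \<alpha>))"
    using R(3) upper_density_mono by (meson order_less_le_trans)
  moreover have "c *\<^sub>R x \<in> HC T" using HC_scaleR[OF assms(1) R(2)] c(1) by simp
  ultimately show ?thesis by blast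
qed

theorem lemma4:
  fixes T :: "'a::{banach, second_countable_topology} \<Rightarrow> 'a"
    and \<alpha> :: real
  assumes "bounded_linear T"
    and "hypercyclic T"
    and "\<alpha> > 0"
  shows "comeager {x \<in> HC T. upper_density (return_set T x (cball 0 \<alpha>)) = cT T}"
proof -
  have cont: "continuous_on UNIV T" using assms(1) by (rule linear_continuous_on)
  have lin: "linear T" using assms(1) by (rule bounded_linear.linear)
  obtain r where r: "cT T = ereal r"
    using cT_nonneg[OF assms(2)] cT_le_1[of T] by (cases "cT T") auto
  let ?good = "HC T \<inter> {x. ereal r \<le> upper_density (return_set T x (ball 0 \<alpha>))}"
  have "comeager {x. ereal r \<le> upper_density (return_set T x (ball 0 \<alpha>))}"
    using below_cT_ball[OF lin assms(3)] r
    by (intro comeager_return_density[OF cont open_ball]) simp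
  then have "comeager ?good" using comeager_HC[OF cont assms(2)] comeager_Int by blast
  moreover have "?good \<subseteq> {x \<in> HC T. upper_density (return_set T x (cball 0 \<alpha>)) = cT T}"
  proof
    fix x assume x: "x \<in> ?good"
    have "upper_density (return_set T x (ball 0 \<alpha>)) \<le> upper_density (return_set T x (cball 0 \<alpha>))"
      by (intro upper_density_mono) (auto simp: return_set_def)
    then show "x \<in> {x \<in> HC T. upper_density (return_set T x (cball 0 \<alpha>)) = cT T}"
      using x upper_density_le_cT[of x T \<alpha>] assms(3) r by auto
  qed
  ultimately show ?thesis by (rule comeager_subset)
qed

end
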